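(* For any odd prime $p$ and any non-negative integer $k$, \[ B^{(-k)}_{p-1}\equiv\begin{cases}1\pmod p & \text{if } k=0 \text{ or } k\not\equiv 0\pmod{p-1},\\ 2\pmod p & \text{if } k\neq 0 \text{ and } k\equiv 0\pmod{p-1}.\end{cases} \]
   Context: For any integer $k$, let $\mathrm{Li}_k(t)=\sum_{n=1}^{\infty} t^n/n^k$. The poly-Bernoulli numbers $B^{(k)}_n$ ($n\ge 0$) are defined by $\frac{\mathrm{Li}_k(1-e^{-t})}{1-e^{-t}}=\sum_{n=0}^{\infty}B^{(k)}_n\frac{t^n}{n!}$. For non-positive upper index these are integers. *)

theory Defs
  imports "HOL-Computational_Algebra.Formal_Power_Series" "HOL-Number_Theory.Number_Theory"
begin

definition polylog_fps :: "int \<Rightarrow> real fps" where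
  "polylog_fps k = Abs_fps (\<lambda>n. if n = 0 then 0 else 1 / (real n powi k))"

definition poly_bernoulli :: "int \<Rightarrow> nat \<Rightarrow> real" where
  "poly_bernoulli k n =
     fact n * fps_nth (fps_compose (polylog_fps k) (1 - fps_exp (-1))
                        / (1 - fps_exp (-1))) n"

end

theory Submission
  imports Defs
begin

text \<open>
  For non-positive upper index the polylogarithm is \<open>Li_{-k}(t) = t \<Sum>_m (m+1)^k t^m\<close>, so
  \<open>B_n^{(-k)} = n! [t^n] \<Sum>_m (m+1)^k (1 - e^{-t})^m\<close>, and expanding \<open>(1 - e^{-t})^m\<close>
  binomially gives an explicit integer.  For \<open>n = p - 1\<close> Fermat's little theorem turns
  \<open>i^{p-1}\<close> into \<open>1\<close> for \<open>0 < i < p\<close>, the inner alternating binomial sums collapse to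
  \<open>-1\<close> (except for \<open>m = 0\<close>), and \<open>B_{p-1}^{(-k)} \<equiv> 1 - \<Sum>_{j<p} j^k (mod p)\<close>.  The classical
  power sum \<open>\<Sum>_{j<p} j^k\<close> is \<open>-1\<close> modulo \<open>p\<close> when \<open>k > 0\<close> and \<open>p - 1 | k\<close>, and \<open>0\<close>
  otherwise, since multiplication by a primitive root permutes the non-zero residues.
\<close>

unbundle fps_syntax

lemma fps_nth_one_minus_exp_power:
  fixes c :: "'a :: field_char_0"
  shows "fact n * ((1 - fps_exp c) ^ m) $ n = (\<Sum>i\<le>m. (-1) ^ i * of_nat (m choose i) * (of_nat i * c) ^ n)"
proof -
  have "(1 - fps_exp c) ^ m = (fps_const (-1) * fps_exp c + 1) ^ m"
    by (simp flip: fps_const_neg)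
  also have "\<dots> = (\<Sum>i\<le>m. of_nat (m choose i) * (fps_const (-1) * fps_exp c) ^ i * 1 ^ (m - i))"
    by (rule binomial_ring)
  also have "\<dots> = (\<Sum>i\<le>m. fps_const (of_nat (m choose i) * (-1) ^ i) * fps_exp (of_nat i * c))"
    by (simp add: power_mult_distrib fps_exp_power_mult fps_of_nat[symmetric] mult.assoc[symmetric])
  finally show ?thesis
    by (simp add: fps_sum_nth sum_distrib_left mult_ac)
qed

lemma fps_compose_X_mult_divide:
  fixes a g :: "'a :: field fps"
  assumes "g $ 0 = 0" and "g \<noteq> 0"
  shows "((fps_X * a) oo g) / g = a oo g"
  using assms by (simp add: fps_compose_mult_distrib fps_divide_times_eq mult.commute)

lemma polylog_fps_neg: "polylog_fps (- int k) = fps_X * Abs_fps (\<lambda>m. of_nat (Suc m) ^ k)"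
  by (rule fps_ext) (auto simp: polylog_fps_def power_int_minus inverse_eq_divide)

definition poly_bernoulli_neg :: "nat \<Rightarrow> nat \<Rightarrow> int" where
  "poly_bernoulli_neg k n =
     (\<Sum>m\<le>n. int (Suc m) ^ k * (\<Sum>i\<le>m. (-1) ^ i * int (m choose i) * (- int i) ^ n))"

lemma of_int_poly_bernoulli_neg: "of_int (poly_bernoulli_neg k n) = poly_bernoulli (- int k) n"
proof -
  define E :: "real fps" where "E = 1 - fps_exp (-1)"
  have "E $ 0 = 0" by (simp add: E_def)
  moreover have "E \<noteq> 0"
    using arg_cong[of E 0 "\<lambda>f. f $ 1"] by (auto simp: E_def)
  ultimately have "(polylog_fps (- int k) oo E) / E = Abs_fps (\<lambda>m. of_nat (Suc m) ^ k) oo E"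
    unfolding polylog_fps_neg by (rule fps_compose_X_mult_divide)
  then have "poly_bernoulli (- int k) n = fact n * (Abs_fps (\<lambda>m. of_nat (Suc m) ^ k) oo E) $ n"
    unfolding poly_bernoulli_def E_def by simp
  also have "\<dots> = (\<Sum>m\<le>n. of_nat (Suc m) ^ k * (fact n * (E ^ m) $ n))"
    unfolding fps_compose_nth atLeast0AtMost sum_distrib_left by (simp add: mult_ac)
  also have "\<dots> = (\<Sum>m\<le>n. of_nat (Suc m) ^ k *
                      (\<Sum>i\<le>m. (-1) ^ i * of_nat (m choose i) * (- of_nat i) ^ n))"
    unfolding E_def fps_nth_one_minus_exp_power by simp
  finally show ?thesis
    unfolding poly_bernoulli_neg_def by simp
qed

lemma power_prime_pred_cong:
  fixes p j :: nat
  assumes "prime p" and "j < p"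
  shows "[int j ^ (p - 1) = of_bool (j \<noteq> 0)] (mod int p)"
proof (cases "j = 0")
  case True
  moreover have "p - 1 > 0" using prime_gt_1_nat[OF assms(1)] by simp
  ultimately show ?thesis by (simp add: zero_power)
next
  case False
  then have "\<not> p dvd j" using assms(2) by (auto dest: dvd_imp_le)
  then have "[j ^ (p - 1) = 1] (mod p)" using fermat_theorem[OF assms(1)] by blast
  then show ?thesis using False by (simp add: cong_int_iff[symmetric])
qed

lemma alternating_binomial_sum_power_prime_pred_cong:
  fixes p m :: nat
  assumes "prime p" and "odd p" and "m < p"
  shows "[(\<Sum>i\<le>m. (-1) ^ i * int (m choose i) * (- int i) ^ (p - 1)) = of_bool (m = 0) - 1] (mod int p)"
proof -
  have "even (p - 1)" using assms(2) by simp
  have "[(\<Sum>i\<le>m. (-1) ^ i * int (m choose i) * (- int i) ^ (p - 1)) =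
         (\<Sum>i\<le>m. (-1) ^ i * int (m choose i) * of_bool (i \<noteq> 0))] (mod int p)"
  proof (intro cong_sum cong_mult cong_refl)
    fix i assume "i \<in> {..m}"
    then have "[int i ^ (p - 1) = of_bool (i \<noteq> 0)] (mod int p)"
      using assms(1,3) by (intro power_prime_pred_cong) auto
    with \<open>even (p - 1)\<close> show "[(- int i) ^ (p - 1) = of_bool (i \<noteq> 0)] (mod int p)"
      by simp
  qed
  also have "(\<Sum>i\<le>m. (-1) ^ i * int (m choose i) * of_bool (i \<noteq> 0)) =
             (\<Sum>i\<le>m. (-1) ^ i * int (m choose i)) - 1"
    by (simp add: sum.atMost_shift)
  also have "\<dots> = of_bool (m = 0) - 1"
    by (simp add: choose_alternating_sum)
  finally show ?thesis .
qed

lemma sum_powers_units_mod_prime_nondvd: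
  fixes p k :: nat
  assumes p: "prime p" and nondvd: "\<not> (p - 1) dvd k"
  shows "[(\<Sum>j=1..<p. int j ^ k) = 0] (mod int p)"
proof (rule ccontr)
  obtain g where g: "residue_primroot p g"
    using prime_primitive_root_exists[of p] p prime_gt_1_nat by blast
  then have ord: "ord p g = p - 1" and cop: "coprime (int g) (int p)"
    using p by (auto simp: residue_primroot_def totient_prime coprime_commute)
  define S where "S = (\<Sum>j=1..<int p. j ^ k)"
  have "(\<Sum>j=1..<p. int j ^ k) = (\<Sum>j\<in>int ` {1..<p}. j ^ k)"
    by (simp add: sum.reindex)
  then have S: "(\<Sum>j=1..<p. int j ^ k) = S"
    by (simp add: S_def image_int_atLeastLessThan)
  have "S = (\<Sum>j=1..<int p. (int g * j mod int p) ^ k)"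
    unfolding S_def by (rule sum.reindex_bij_betw[OF bij_betw_int_remainders_mult[OF cop], symmetric])
  also have "[\<dots> = (\<Sum>j=1..<int p. (int g * j) ^ k)] (mod int p)"
    by (intro cong_sum cong_pow) (simp add: cong_def)
  also have "(\<Sum>j=1..<int p. (int g * j) ^ k) = int g ^ k * S"
    by (simp add: S_def power_mult_distrib sum_distrib_left)
  finally have S_mult: "[S * 1 = S * int g ^ k] (mod int p)"
    by (simp add: mult.commute)
  assume "\<not> [(\<Sum>j=1..<p. int j ^ k) = 0] (mod int p)"
  then have "\<not> int p dvd S"
    unfolding S cong_0_iff .
  then have "coprime S (int p)"
    using prime_imp_coprime[of "int p" S] p by (simp add: coprime_commute)
  then have "[1 = int g ^ k] (mod int p)"
    using S_mult by (simp only: cong_mult_lcancel)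
  then have "[g ^ k = 1] (mod p)"
    by (metis cong_int_iff cong_sym of_nat_1 of_nat_power)
  then have "ord p g dvd k"
    by (simp only: ord_divides)
  with ord nondvd show False by simp
qed

lemma sum_powers_mod_prime:
  fixes p k :: nat
  assumes p: "prime p"
  shows "[(\<Sum>j<p. int j ^ k) = - of_bool (k > 0 \<and> (p - 1) dvd k)] (mod int p)"
proof (cases "k = 0")
  case True
  then show ?thesis by (simp add: cong_0_iff)
next
  case False
  then have units: "(\<Sum>j<p. int j ^ k) = (\<Sum>j=1..<p. int j ^ k)"
    by (intro sum.mono_neutral_right) auto
  show ?thesis
  proof (cases "(p - 1) dvd k")
    case True
    then obtain r where r: "k = (p - 1) * r" ..
    have "[(\<Sum>j=1..<p. int j ^ k) = (\<Sum>j=1..<p. 1)] (mod int p)"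
    proof (intro cong_sum)
      fix j assume "j \<in> {1..<p}"
      then have "[(int j ^ (p - 1)) ^ r = 1 ^ r] (mod int p)"
        using power_prime_pred_cong[OF p, of j] by (intro cong_pow) simp
      then show "[int j ^ k = 1] (mod int p)"
        by (simp add: r power_mult)
    qed
    moreover have "[(\<Sum>j=1..<p. 1 :: int) = -1] (mod int p)"
      using prime_gt_1_nat[OF p] by (simp add: cong_iff_dvd_diff)
    ultimately show ?thesis
      using False True units by (auto intro: cong_trans)
  next
    case nondvd: False
    show ?thesis
      using sum_powers_units_mod_prime_nondvd[OF p nondvd] units nondvd by simp
  qed
qed

lemma poly_bernoulli_neg_prime_pred_cong:
  fixes p k :: nat
  assumes p: "prime p" and "odd p"
  shows "[poly_bernoulli_neg k (p - 1) = 1 + of_bool (k > 0 \<and> (p - 1) dvd k)] (mod int p)"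
proof -
  define f where "f j = int j ^ k" for j
  have range: "{..p - 1} = {..<p}"
    using prime_gt_0_nat[OF p] by auto
  have "[poly_bernoulli_neg k (p - 1) = (\<Sum>m<p. f (Suc m) * (of_bool (m = 0) - 1))] (mod int p)"
    unfolding poly_bernoulli_neg_def f_def range using assms
    by (intro cong_sum cong_mult cong_refl alternating_binomial_sum_power_prime_pred_cong) auto
  also have "(\<Sum>m<p. f (Suc m) * (of_bool (m = 0) - 1)) = 1 - (\<Sum>m<p. f (Suc m))"
    using prime_gt_0_nat[OF p] by (simp add: algebra_simps sum_subtractf f_def)
  also have "(\<Sum>m<p. f (Suc m)) = (\<Sum>j<p. f j) + (f p - f 0)"
    using sum.lessThan_Suc_shift[of f p] sum.lessThan_Suc[of f p] by simp
  finally have shifted: "[poly_bernoulli_neg k (p - 1) = 1 - ((\<Sum>j<p. f j) + (f p - f 0))] (mod int p)" .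
  have "[int p ^ k = 0 ^ k] (mod int p)"
    by (intro cong_pow) (simp add: cong_0_iff)
  then have "[f p - f 0 = 0] (mod int p)"
    by (simp add: f_def cong_diff_iff_cong_0)
  then have "[1 - ((\<Sum>j<p. f j) + (f p - f 0)) = 1 - (- of_bool (k > 0 \<and> (p - 1) dvd k) + 0)] (mod int p)"
    unfolding f_def by (intro cong_diff cong_add cong_refl sum_powers_mod_prime p)
  with shifted show ?thesis
    by (auto dest: cong_trans)
qed

theorem theorem3p1:
  fixes p k :: nat
  assumes "prime p" and "odd p"
  shows "\<exists>b::int. poly_bernoulli (- int k) (p - 1) = of_int b \<and>
           [b = (if k = 0 \<or> \<not> [k = 0] (mod (p - 1)) then 1 else 2)] (mod int p)"
proof (intro exI conjI)
  have rhs_eq: "(if k = 0 \<or> \<not> [k = 0] (mod (p - 1)) then 1 else 2 :: int) =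
                 1 + of_bool (k > 0 \<and> (p - 1) dvd k)"
    by (auto simp: cong_0_iff)
  show "poly_bernoulli (- int k) (p - 1) = of_int (poly_bernoulli_neg k (p - 1))"
    by (rule of_int_poly_bernoulli_neg [symmetric])
  show "[poly_bernoulli_neg k (p - 1) = (if k = 0 \<or> \<not> [k = 0] (mod (p - 1)) then 1 else 2)] (mod int p)"
    unfolding rhs_eq by (rule poly_bernoulli_neg_prime_pred_cong[OF assms])
qed

end
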